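(* Let $\Sigma$ be a set of prime numbers, $S$ the multiplicative submonoid of $\mathbb{N}$ generated by $\Sigma$, $\mathbb{Z}[S^{-1}]\subset\mathbb{Q}$ the localization, and $\mathbb{A}_{f}=\prod'_{q\in\Sigma}(\mathbb{Q}_q,\mathbb{Z}_q)$. Let $Q$ be a locally compact topological $\mathbb{A}_f$-module and let $C$ be any compact open subgroup of $Q$. Then $Q$ is generated by $C$ as a $\mathbb{Z}[S^{-1}]$-module. In particular, $Q$ is compactly generated over $\mathbb{Z}[S^{-1}]$ and $\sigma$-compact.
   Context: All topological groups are Hausdorff. The restricted product consists of families $(x_q)$ with $x_q\in\mathbb{Q}_q$ and $x_q\in\mathbb{Z}_q$ for almost all $q$, with neighbourhood basis of $0$ the sets $\prod U_q$ with $U_q$ open neighbourhood of $0$ in $\mathbb{Q}_q$ and $U_q=\mathbb{Z}_q$ for almost all $q$; it is a locally compact topological ring containing $\mathbb{Z}[S^{-1}]$ diagonally. A locally compact topological module is a locally compact abelian group with continuous scalar multiplication. *)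

theory Defs
  imports "HOL-Analysis.Analysis" "HOL-Computational_Algebra.Primes"
begin

text \<open>An element of Q_q is represented by its canonical digit function d : int => int,
  x = sum_k d k * q^k, with digits in {0..q-1} and d k = 0 for k sufficiently negative.\<close>

definition Qp :: "nat \<Rightarrow> (int \<Rightarrow> int) set" where
  "Qp q = {d. (\<forall>k. 0 \<le> d k \<and> d k < int q) \<and> (\<exists>N. \<forall>k<N. d k = 0)}"

definition Zp :: "nat \<Rightarrow> (int \<Rightarrow> int) set" where
  "Zp q = {d \<in> Qp q. \<forall>k<0. d k = 0}"

definition q_integral :: "nat \<Rightarrow> rat \<Rightarrow> bool" where
  "q_integral q r \<longleftrightarrow> \<not> (int q dvd snd (quotient_of r))"

definition qcong :: "nat \<Rightarrow> int \<Rightarrow> rat \<Rightarrow> rat \<Rightarrow> bool" where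
  "qcong q n a b \<longleftrightarrow> q_integral q ((a - b) / (of_nat q powi n))"

definition qtrunc :: "nat \<Rightarrow> (int \<Rightarrow> int) \<Rightarrow> int \<Rightarrow> rat" where
  "qtrunc q d n = (\<Sum>k\<in>{k. k < n \<and> d k \<noteq> 0}. of_int (d k) * of_nat q powi k)"

definition qlim :: "nat \<Rightarrow> (int \<Rightarrow> int) \<Rightarrow> (nat \<Rightarrow> rat) \<Rightarrow> bool" where
  "qlim q d s \<longleftrightarrow> (\<forall>n::int. \<exists>M. \<forall>m\<ge>M. qcong q n (qtrunc q d n) (s m))"

definition qp_of_rat :: "nat \<Rightarrow> rat \<Rightarrow> (int \<Rightarrow> int)" where
  "qp_of_rat q r = (THE d. d \<in> Qp q \<and> qlim q d (\<lambda>_. r))"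

definition qp_add :: "nat \<Rightarrow> (int \<Rightarrow> int) \<Rightarrow> (int \<Rightarrow> int) \<Rightarrow> (int \<Rightarrow> int)" where
  "qp_add q x y = (THE d. d \<in> Qp q \<and> qlim q d (\<lambda>m. qtrunc q x (int m) + qtrunc q y (int m)))"

definition qp_neg :: "nat \<Rightarrow> (int \<Rightarrow> int) \<Rightarrow> (int \<Rightarrow> int)" where
  "qp_neg q x = (THE d. d \<in> Qp q \<and> qlim q d (\<lambda>m. - qtrunc q x (int m)))"

definition qp_mult :: "nat \<Rightarrow> (int \<Rightarrow> int) \<Rightarrow> (int \<Rightarrow> int) \<Rightarrow> (int \<Rightarrow> int)" where
  "qp_mult q x y = (THE d. d \<in> Qp q \<and> qlim q d (\<lambda>m. qtrunc q x (int m) * qtrunc q y (int m)))"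

type_synonym adele = "nat \<Rightarrow> (int \<Rightarrow> int)"

text \<open>Families indexed by primes q in Sigma; components outside Sigma are fixed to the
  zero digit function (so that elements are determined by their Sigma-components).\<close>
definition Af :: "nat set \<Rightarrow> adele set" where
  "Af \<Sigma> = {x. (\<forall>q\<in>\<Sigma>. x q \<in> Qp q) \<and> (\<forall>q. q \<notin> \<Sigma> \<longrightarrow> x q = (\<lambda>_. 0))
               \<and> finite {q\<in>\<Sigma>. x q \<notin> Zp q}}"

definition af_add :: "nat set \<Rightarrow> adele \<Rightarrow> adele \<Rightarrow> adele" where
  "af_add \<Sigma> x y = (\<lambda>q. if q \<in> \<Sigma> then qp_add q (x q) (y q) else (\<lambda>_. 0))"

definition af_neg :: "nat set \<Rightarrow> adele \<Rightarrow> adele" where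
  "af_neg \<Sigma> x = (\<lambda>q. if q \<in> \<Sigma> then qp_neg q (x q) else (\<lambda>_. 0))"

definition af_mult :: "nat set \<Rightarrow> adele \<Rightarrow> adele \<Rightarrow> adele" where
  "af_mult \<Sigma> x y = (\<lambda>q. if q \<in> \<Sigma> then qp_mult q (x q) (y q) else (\<lambda>_. 0))"

definition af_of_rat :: "nat set \<Rightarrow> rat \<Rightarrow> adele" where
  "af_of_rat \<Sigma> r = (\<lambda>q. if q \<in> \<Sigma> then qp_of_rat q r else (\<lambda>_. 0))"

text \<open>Basic neighbourhoods x + prod_q q^(n q) Z_q with n q = 0 for almost all q in Sigma
  (the sets q^n Z_q, n in Z, form a neighbourhood basis of 0 in Q_q).\<close>
definition af_nbhd :: "nat set \<Rightarrow> adele \<Rightarrow> (nat \<Rightarrow> int) \<Rightarrow> adele set" where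
  "af_nbhd \<Sigma> x n = {y \<in> Af \<Sigma>. \<forall>q\<in>\<Sigma>. \<forall>k < n q. qp_add q (y q) (qp_neg q (x q)) k = 0}"

definition af_topology :: "nat set \<Rightarrow> adele topology" where
  "af_topology \<Sigma> = topology_generated_by
     {af_nbhd \<Sigma> x n | x n. x \<in> Af \<Sigma> \<and> finite {q\<in>\<Sigma>. n q \<noteq> 0}}"

definition S_monoid :: "nat set \<Rightarrow> nat set" where
  "S_monoid \<Sigma> = {s. s > 0 \<and> (\<forall>p. prime p \<and> p dvd s \<longrightarrow> p \<in> \<Sigma>)}"

definition Z_S_inv :: "nat set \<Rightarrow> rat set" where
  "Z_S_inv \<Sigma> = {of_int a / of_nat s | a s. s \<in> S_monoid \<Sigma>}"

definition lc_Af_module :: "nat set \<Rightarrow> (adele \<Rightarrow> 'm::{topological_ab_group_add,t2_space} \<Rightarrow> 'm) \<Rightarrow> bool" where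
  "lc_Af_module \<Sigma> sm \<longleftrightarrow>
     locally_compact_space (euclidean :: 'm topology) \<and>
     (\<forall>a\<in>Af \<Sigma>. \<forall>b\<in>Af \<Sigma>. \<forall>x. sm (af_add \<Sigma> a b) x = sm a x + sm b x) \<and>
     (\<forall>a\<in>Af \<Sigma>. \<forall>x y. sm a (x + y) = sm a x + sm a y) \<and>
     (\<forall>a\<in>Af \<Sigma>. \<forall>b\<in>Af \<Sigma>. \<forall>x. sm (af_mult \<Sigma> a b) x = sm a (sm b x)) \<and>
     (\<forall>x. sm (af_of_rat \<Sigma> 1) x = x) \<and>
     continuous_map (prod_topology (af_topology \<Sigma>) euclidean) euclidean (\<lambda>(a, x). sm a x)"

definition ZS_span :: "nat set \<Rightarrow> (adele \<Rightarrow> 'm::ab_group_add \<Rightarrow> 'm) \<Rightarrow> 'm set \<Rightarrow> 'm set" where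
  "ZS_span \<Sigma> sm K = {x. \<exists>(n::nat) r c. (\<forall>i<n. r i \<in> Z_S_inv \<Sigma> \<and> c i \<in> K)
                               \<and> x = (\<Sum>i<n. sm (af_of_rat \<Sigma> (r i)) (c i))}"

end

theory Submission
  imports Defs
begin

text \<open>
  Fix \<open>x \<in> Q\<close>. The orbit map \<open>a \<mapsto> a \<cdot> x\<close> is continuous on \<open>\<A>\<^sub>f\<close> and sends \<open>0\<close> into the open
  set \<open>C\<close>, so it maps a whole box \<open>\<Prod>\<^sub>q q^(n\<^sub>q) \<int>\<^sub>q\<close> (with \<open>n\<^sub>q = 0\<close> for almost all \<open>q\<close>) into \<open>C\<close>.
  The integer \<open>s = \<Prod>\<^sub>q q^(n\<^sub>q)\<close> lies in \<open>S\<close> and in that box, hence \<open>s \<cdot> x \<in> C\<close> and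
  \<open>x = s\<^sup>-\<^sup>1 \<cdot> (s \<cdot> x) \<in> s\<^sup>-\<^sup>1 C\<close>. So \<open>Q\<close> is the union of the countably many compact sets \<open>s\<^sup>-\<^sup>1 C\<close>,
  \<open>s \<in> S\<close>, each of which lies in the \<open>\<int>[S\<^sup>-\<^sup>1]\<close>-span of \<open>C\<close>.

  Most of the work is \<open>q\<close>-adic bookkeeping: the operations of \<open>\<rat>\<^sub>q\<close> are given on digit
  expansions as limits of truncations, so one has to show that these limits exist and that
  the digits of a limit below position \<open>n\<close> only depend on the sequence modulo \<open>q^n\<close>.
\<close>

section \<open>Residues of fractions\<close>

definition quot_residue :: "int \<Rightarrow> int \<Rightarrow> int \<Rightarrow> int" where
  "quot_residue a b m = (THE R. 0 \<le> R \<and> R < m \<and> m dvd a - R * b)"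

lemma quot_residue_unique:
  fixes a b m R R' :: int
  assumes "coprime b m"
    and "0 \<le> R" "R < m" "m dvd a - R * b"
    and "0 \<le> R'" "R' < m" "m dvd a - R' * b"
  shows "R = R'"
proof -
  have "m dvd (R - R') * b"
    using dvd_diff[OF assms(7) assms(4)] by (simp add: algebra_simps)
  then have "m dvd R - R'"
    using assms(1) by (metis coprime_commute coprime_dvd_mult_left_iff)
  then have "R mod m = R' mod m" using mod_eq_dvd_iff by blast
  then show ?thesis using assms(2,3,5,6) by simp
qed

lemma quot_residue:
  fixes a b m :: int
  assumes "coprime b m" "m > 0"
  shows "0 \<le> quot_residue a b m \<and> quot_residue a b m < m \<and> m dvd a - quot_residue a b m * b"
proof -
  obtain u v where uv: "u * b + v * m = 1"
    using bezout_int[of b m] assms(1) by auto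
  define R where "R = (a * u) mod m"
  have "a - R * b = a * (u * b + v * m) - (a * u - m * (a * u div m)) * b"
    unfolding R_def uv by (simp add: minus_div_mult_eq_mod[symmetric] algebra_simps)
  also have "\<dots> = m * (a * v + (a * u div m) * b)"
    by (simp add: algebra_simps)
  finally have "m dvd a - R * b" by simp
  moreover have "0 \<le> R" "R < m" unfolding R_def using assms(2) by auto
  ultimately have "\<exists>!R. 0 \<le> R \<and> R < m \<and> m dvd a - R * b"
    by (blast intro: quot_residue_unique[OF assms(1)])
  then show ?thesis unfolding quot_residue_def by (rule theI')
qed

lemma quot_residue_mod:
  fixes a b m m' :: int
  assumes "coprime b m" "m > 0" "m' dvd m" "m' > 0"
  shows "quot_residue a b m mod m' = quot_residue a b m'"
proof -
  let ?R = "quot_residue a b m"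
  have coprime': "coprime b m'" using coprime_divisors[OF dvd_refl assms(3,1)] .
  have regroup: "x - r * y = (x - (z * t + r) * y) + z * (t * y)" for x r y z t :: int
    by (simp add: algebra_simps)
  have eq: "a - (?R mod m') * b = (a - ?R * b) + m' * ((?R div m') * b)"
    using regroup[of a "?R mod m'" b m' "?R div m'"] by (simp only: mult_div_mod_eq)
  have "m' dvd a - ?R * b"
    using quot_residue[OF assms(1,2)] dvd_trans[OF assms(3)] by blast
  then have "m' dvd a - (?R mod m') * b"
    unfolding eq by (rule dvd_add[OF _ dvd_triv_left])
  moreover have "0 \<le> ?R mod m'" "?R mod m' < m'" using assms(4) by simp_all
  ultimately show ?thesis
    using quot_residue[OF coprime' assms(4)] quot_residue_unique[OF coprime'] by blast
qed

lemma div_less_of_less_mult: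
  fixes m n k :: int
  assumes "n > 0" "m < k * n"
  shows "m div n < k"
proof -
  have "m div n * n \<le> m"
    using pos_mod_sign[OF assms(1), of m] minus_mod_eq_div_mult[of m n] by linarith
  then have "m div n * n < k * n" using assms(2) by linarith
  then show ?thesis using assms(1) by (simp add: mult_less_cancel_right)
qed

section \<open>\<open>q\<close>-adic valuations and digit expansions\<close>

definition qval_ge :: "nat \<Rightarrow> int \<Rightarrow> rat \<Rightarrow> bool" where
  "qval_ge q N r \<longleftrightarrow> q_integral q (r / of_nat q powi N)"

lemma qcong_iff_qval_ge: "qcong q n a b \<longleftrightarrow> qval_ge q n (a - b)"
  by (simp add: qcong_def qval_ge_def)

definition qcauchy :: "nat \<Rightarrow> (nat \<Rightarrow> rat) \<Rightarrow> bool" where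
  "qcauchy q s \<longleftrightarrow> (\<forall>n. \<exists>M. \<forall>m\<ge>M. \<forall>m'\<ge>M. qval_ge q n (s m - s m'))"

context
  fixes q :: nat
  assumes q_prime: "prime q"
begin

lemmas q_pos = prime_gt_0_nat[OF q_prime]

lemma q_integral_iff:
  "q_integral q r \<longleftrightarrow> (\<exists>a b. b > 0 \<and> \<not> int q dvd b \<and> r = of_int a / of_int b)"
proof
  assume "q_integral q r"
  then show "\<exists>a b. b > 0 \<and> \<not> int q dvd b \<and> r = of_int a / of_int b"
    unfolding q_integral_def by (metis prod.collapse quotient_of_denom_pos quotient_of_div)
next
  assume "\<exists>a b. b > 0 \<and> \<not> int q dvd b \<and> r = of_int a / of_int b"
  then obtain a b where b: "b > 0" "\<not> int q dvd b" and r: "r = of_int a / of_int b" by blast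
  obtain a' b' where qo: "quotient_of r = (a', b')" by (cases "quotient_of r")
  have "b' > 0" using qo quotient_of_denom_pos by blast
  moreover have "of_int a / of_int b = (of_int a' / of_int b' :: rat)"
    using r quotient_of_div[OF qo] by simp
  ultimately have "a * b' = a' * b"
    using b by (simp add: field_simps) (metis of_int_eq_iff of_int_mult)
  then have "b' dvd a' * b" by (metis dvd_triv_right)
  then have "b' dvd b"
    using qo quotient_of_coprime by (metis coprime_commute coprime_dvd_mult_right_iff)
  then show "q_integral q r" unfolding q_integral_def qo using b(2) dvd_trans by auto
qed

lemma q_integral_fraction: "b > 0 \<Longrightarrow> \<not> int q dvd b \<Longrightarrow> q_integral q (of_int a / of_int b)"
  using q_integral_iff by blast

lemma q_integral_of_int: "q_integral q (of_int a)"
  using q_integral_fraction[of 1 a] q_prime not_prime_1 by force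

lemma q_integral_add_mult:
  assumes "q_integral q r" "q_integral q s"
  shows "q_integral q (r + s)" "q_integral q (r * s)"
proof -
  obtain a b where ab: "b > 0" "\<not> int q dvd b" "r = of_int a / of_int b"
    using assms q_integral_iff by blast
  obtain c d where cd: "d > 0" "\<not> int q dvd d" "s = of_int c / of_int d"
    using assms q_integral_iff by blast
  have bd: "b * d > 0" "\<not> int q dvd b * d"
    using ab cd q_prime by (simp_all add: prime_dvd_mult_iff)
  have "r + s = of_int (a * d + c * b) / of_int (b * d)" "r * s = of_int (a * c) / of_int (b * d)"
    using ab cd by (simp_all add: field_simps)
  then show "q_integral q (r + s)" "q_integral q (r * s)"
    using q_integral_fraction[OF bd] by metis+
qed

lemma q_integral_neg: "q_integral q r \<Longrightarrow> q_integral q (- r)"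
  using q_integral_add_mult(2)[OF q_integral_of_int[of "-1"]] by simp

lemma dvd_of_q_integral_div: "q_integral q (of_int c / of_nat q) \<Longrightarrow> int q dvd c"
proof -
  assume "q_integral q (of_int c / of_nat q)"
  then obtain a b where ab: "b > 0" "\<not> int q dvd b" "of_int c / of_nat q = (of_int a / of_int b :: rat)"
    using q_integral_iff by blast
  then have "c * b = a * int q"
    using q_pos by (simp add: field_simps) (metis of_int_eq_iff of_int_mult of_int_of_nat_eq)
  then have "int q dvd c * b" by (metis dvd_triv_right)
  then show ?thesis using ab q_prime by (simp add: prime_dvd_mult_iff)
qed

lemma qval_ge_add: "qval_ge q N r \<Longrightarrow> qval_ge q N s \<Longrightarrow> qval_ge q N (r + s)"
  unfolding qval_ge_def using q_integral_add_mult(1) by (simp add: add_divide_distrib)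

lemma qval_ge_neg: "qval_ge q N r \<Longrightarrow> qval_ge q N (- r)"
  unfolding qval_ge_def using q_integral_neg by simp

lemma qval_ge_diff: "qval_ge q N r \<Longrightarrow> qval_ge q N s \<Longrightarrow> qval_ge q N (r - s)"
  using qval_ge_add[OF _ qval_ge_neg] by simp

lemma qval_ge_mult: "qval_ge q N r \<Longrightarrow> qval_ge q M s \<Longrightarrow> qval_ge q (N + M) (r * s)"
proof -
  assume "qval_ge q N r" "qval_ge q M s"
  moreover have "r * s / of_nat q powi (N + M) = (r / of_nat q powi N) * (s / of_nat q powi M)"
    using q_pos by (simp add: power_int_add)
  ultimately show ?thesis unfolding qval_ge_def using q_integral_add_mult(2) by presburger
qed

lemma qval_ge_int_mult_powi:
  assumes "N \<le> k"
  shows "qval_ge q N (of_int c * of_nat q powi k)"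
proof -
  have "(of_nat q :: rat) powi k = of_nat q powi N * of_nat q ^ nat (k - N)"
    using assms q_pos by (simp flip: power_int_add power_int_of_nat)
  then have "of_int c * of_nat q powi k / of_nat q powi N = (of_int (c * int q ^ nat (k - N)) :: rat)"
    using q_pos by simp
  then show ?thesis unfolding qval_ge_def using q_integral_of_int by metis
qed

lemma qval_ge_of_int: "N \<le> 0 \<Longrightarrow> qval_ge q N (of_int c)"
  using qval_ge_int_mult_powi[of N 0 c] by simp

lemma qval_ge_zero: "qval_ge q N 0"
  unfolding qval_ge_def using q_integral_of_int[of 0] by simp

lemma qval_ge_mono: "qval_ge q N r \<Longrightarrow> M \<le> N \<Longrightarrow> qval_ge q M r"
  using qval_ge_mult[OF _ qval_ge_of_int[of "M - N" 1], of N r] by simp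

lemma qval_ge_sum: "(\<And>k. k \<in> A \<Longrightarrow> qval_ge q N (f k)) \<Longrightarrow> qval_ge q N (\<Sum>k\<in>A. f k)"
  by (induction A rule: infinite_finite_induct) (auto intro: qval_ge_add qval_ge_zero)

lemma qval_ge_exists: "\<exists>N. qval_ge q N r"
proof -
  obtain a b where ab: "quotient_of r = (a, b)" by (cases "quotient_of r")
  have b0: "b > 0" using ab quotient_of_denom_pos by blast
  have "b \<noteq> 0" "\<not> is_unit (int q)" using b0 q_prime by auto
  then obtain b' where b: "b = int q ^ multiplicity (int q) b * b'" and b': "\<not> int q dvd b'"
    using multiplicity_decompose' by blast
  have "b' > 0" using b0 b q_pos by (metis zero_less_mult_pos of_nat_0_less_iff zero_less_power)
  moreover have "(of_int b :: rat) = of_nat q ^ multiplicity (int q) b * of_int b'"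
    using b by (metis of_int_mult of_int_power of_int_of_nat_eq)
  then have "r / of_nat q powi (- int (multiplicity (int q) b)) = of_int a / of_int b'"
    using q_pos b0 quotient_of_div[OF ab] by (simp add: power_int_minus field_simps)
  ultimately show ?thesis unfolding qval_ge_def using q_integral_fraction[OF _ b'] by metis
qed

lemma qtrunc_eq_sum:
  assumes "\<forall>k<N. d k = 0"
  shows "qtrunc q d n = (\<Sum>k\<in>{N..<n}. of_int (d k) * of_nat q powi k)"
  unfolding qtrunc_def
proof (rule sum.mono_neutral_right[symmetric])
  show "{k. k < n \<and> d k \<noteq> 0} \<subseteq> {N..<n}" using assms leI by fastforce
qed auto

lemma qtrunc_plus_1:
  assumes "\<forall>k<N. d k = 0"
  shows "qtrunc q d (j + 1) = qtrunc q d j + of_int (d j) * of_nat q powi j"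
proof -
  have vanish: "\<forall>k<min N j. d k = 0" using assms by auto
  have "{min N j..<j + 1} = insert j {min N j..<j}" by auto
  then show ?thesis unfolding qtrunc_eq_sum[OF vanish] by (simp add: add.commute)
qed

lemma qval_ge_qtrunc: "\<forall>k<N. d k = 0 \<Longrightarrow> qval_ge q N (qtrunc q d n)"
  by (auto simp: qtrunc_eq_sum intro!: qval_ge_sum qval_ge_int_mult_powi)

lemma qtrunc_eq_0: "\<forall>k<N. d k = 0 \<Longrightarrow> n \<le> N \<Longrightarrow> qtrunc q d n = 0"
  by (simp add: qtrunc_eq_sum)

lemma qtrunc_zero: "qtrunc q (\<lambda>_. 0) n = 0"
  unfolding qtrunc_def by simp

lemma qval_ge_qtrunc_diff:
  assumes "\<forall>k<N. d k = 0" "n \<le> m"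
  shows "qval_ge q n (qtrunc q d m - qtrunc q d n)"
proof -
  have vanish: "\<forall>k<min N n. d k = 0" using assms by auto
  have split: "{min N n..<m} = {min N n..<n} \<union> {n..<m}" using assms by auto
  have "qtrunc q d m - qtrunc q d n = (\<Sum>k\<in>{n..<m}. of_int (d k) * of_nat q powi k)"
    unfolding qtrunc_eq_sum[OF vanish] split by (subst sum.union_disjoint) auto
  then show ?thesis by (auto intro!: qval_ge_sum qval_ge_int_mult_powi)
qed

lemma Qp_vanish_below: "d \<in> Qp q \<Longrightarrow> \<exists>N. \<forall>k<N. d k = 0"
  unfolding Qp_def by auto

lemma zero_mem_Qp: "(\<lambda>_. 0) \<in> Qp q"
  unfolding Qp_def using q_pos by auto

lemma Qp_eq_below:
  assumes d: "d \<in> Qp q" and d': "d' \<in> Qp q"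
    and close: "\<forall>n'\<le>n. qval_ge q n' (qtrunc q d n' - qtrunc q d' n')"
  shows "\<forall>k<n. d k = d' k"
proof -
  obtain N where N: "\<forall>k<N. d k = 0" "\<forall>k<N. d' k = 0"
    using Qp_vanish_below[OF d] Qp_vanish_below[OF d'] by (metis min_less_iff_conj)
  have step: "d k = d' k" if below: "\<forall>j<k. d j = d' j" and k: "k < n" for k
  proof -
    have same_below: "qtrunc q d k = qtrunc q d' k"
      using below by (simp add: qtrunc_eq_sum[OF N(1)] qtrunc_eq_sum[OF N(2)])
    have "qval_ge q (k + 1) (qtrunc q d (k + 1) - qtrunc q d' (k + 1))"
      using close k by simp
    then have "qval_ge q (k + 1) (of_int (d k - d' k) * of_nat q powi k)"
      unfolding qtrunc_plus_1[OF N(1)] qtrunc_plus_1[OF N(2)] same_below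
      by (simp add: algebra_simps)
    moreover have "of_int (d k - d' k) * of_nat q powi k / of_nat q powi (k + 1)
        = (of_int (d k - d' k) / of_nat q :: rat)"
      using q_pos by (simp add: power_int_add)
    ultimately have "d k mod int q = d' k mod int q"
      unfolding qval_ge_def by (metis dvd_of_q_integral_div mod_eq_dvd_iff)
    then show ?thesis using d d' unfolding Qp_def by simp
  qed
  have agree: "\<forall>k<N + int i. k < n \<longrightarrow> d k = d' k" for i
  proof (induction i)
    case 0
    then show ?case using N by simp
  next
    case (Suc i)
    have "d k = d' k" if "k < N + int i + 1" "k < n" for k
    proof (cases "k < N + int i")
      case True
      then show ?thesis using Suc.IH that(2) by blast
    next
      case False
      then show ?thesis using Suc.IH that by (intro step) auto
    qed
    then show ?case by simp
  qed
  show ?thesis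
  proof (intro allI impI)
    fix k assume "k < n"
    then show "d k = d' k" using agree[of "nat (k - N + 1)"] by simp
  qed
qed

lemma qlim_const_iff: "qlim q d (\<lambda>_. r) \<longleftrightarrow> (\<forall>n. qval_ge q n (qtrunc q d n - r))"
  unfolding qlim_def qcong_iff_qval_ge by auto

lemma qlim_zero: "qlim q (\<lambda>_. 0) (\<lambda>_. 0)"
  by (simp add: qlim_const_iff qtrunc_zero qval_ge_zero)

lemma qlim_eq_below:
  assumes d: "d \<in> Qp q" and d': "d' \<in> Qp q" and lim: "qlim q d s" and lim': "qlim q d' s'"
    and close: "\<forall>m\<ge>M. qval_ge q n (s m - s' m)"
  shows "\<forall>k<n. d k = d' k"
proof (rule Qp_eq_below[OF d d'], intro allI impI)
  fix n' assume "n' \<le> n"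
  obtain M1 M2 where M1: "\<forall>m\<ge>M1. qval_ge q n' (qtrunc q d n' - s m)"
    and M2: "\<forall>m\<ge>M2. qval_ge q n' (qtrunc q d' n' - s' m)"
    using lim lim' unfolding qlim_def qcong_iff_qval_ge by meson
  define m where "m = max M (max M1 M2)"
  have "qval_ge q n' (qtrunc q d n' - s m)" "qval_ge q n' (qtrunc q d' n' - s' m)"
    using M1 M2 unfolding m_def by simp_all
  moreover have "qval_ge q n' (s m - s' m)"
    using close qval_ge_mono[OF _ \<open>n' \<le> n\<close>] unfolding m_def by simp
  ultimately have "qval_ge q n' ((qtrunc q d n' - s m) - (qtrunc q d' n' - s' m) + (s m - s' m))"
    by (rule qval_ge_add[OF qval_ge_diff])
  then show "qval_ge q n' (qtrunc q d n' - qtrunc q d' n')" by simp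
qed

lemma qlim_unique:
  assumes "d \<in> Qp q" "d' \<in> Qp q" "qlim q d s" "qlim q d' s"
  shows "d = d'"
proof
  fix k
  show "d k = d' k" using qlim_eq_below[OF assms, of 0 "k + 1"] qval_ge_zero by simp
qed

lemma qlim_const_vanish_below:
  "d \<in> Qp q \<Longrightarrow> qlim q d (\<lambda>_. r) \<Longrightarrow> qval_ge q N r \<Longrightarrow> \<forall>k<N. d k = 0"
  using qlim_eq_below[OF _ zero_mem_Qp _ qlim_zero, where M = 0] by simp

lemma the_qlim:
  assumes "\<exists>d\<in>Qp q. qlim q d s"
  shows "(THE d. d \<in> Qp q \<and> qlim q d s) \<in> Qp q \<and> qlim q (THE d. d \<in> Qp q \<and> qlim q d s) s"
proof -
  have "\<exists>!d. d \<in> Qp q \<and> qlim q d s" using assms qlim_unique by blast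
  then show ?thesis by (rule theI')
qed

lemma the_qlim_eq: "d \<in> Qp q \<Longrightarrow> qlim q d s \<Longrightarrow> (THE d. d \<in> Qp q \<and> qlim q d s) = d"
  using qlim_unique by (intro the_equality) auto

lemma coprime_power_q: "\<not> int q dvd b \<Longrightarrow> coprime b (int q ^ i)"
  using prime_imp_coprime[of "int q" b] q_prime by (simp add: coprime_commute)

lemma exists_Qp_truncating_to_residues:
  assumes b: "\<not> int q dvd b"
  shows "\<exists>d\<in>Qp q. (\<forall>k<N. d k = 0)
           \<and> (\<forall>i. qtrunc q d (N + int i) = of_nat q powi N * of_int (quot_residue a b (int q ^ i)))"
proof -
  define R where "R i = quot_residue a b (int q ^ i)" for i
  have R: "0 \<le> R i" "R i < int q ^ i" for i
    unfolding R_def using quot_residue[OF coprime_power_q[OF b]] q_pos by auto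
  have R_Suc: "R (Suc i) = R i + int q ^ i * (R (Suc i) div int q ^ i)" for i
  proof -
    have "R (Suc i) mod int q ^ i = R i"
      unfolding R_def by (rule quot_residue_mod[OF coprime_power_q[OF b]]) (use q_pos in auto)
    then show ?thesis by (metis add.commute mult_div_mod_eq)
  qed
  \<comment> \<open>\<open>d (N + i)\<close> is the \<open>i\<close>-th digit of \<open>a / b\<close>, read off from its residue modulo \<open>q^(i+1)\<close>\<close>
  define d where "d k = (if k < N then 0 else R (Suc (nat (k - N))) div int q ^ nat (k - N))" for k
  have vanish: "\<forall>k<N. d k = 0" unfolding d_def by simp
  have "R (Suc i) div int q ^ i < int q" for i
    using R(2)[of "Suc i"] q_pos by (intro div_less_of_less_mult) simp_all
  then have "0 \<le> d k \<and> d k < int q" for k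
    unfolding d_def using R(1) q_pos by (simp add: div_int_pos_iff)
  then have "d \<in> Qp q" unfolding Qp_def using vanish by auto
  moreover have "qtrunc q d (N + int i) = of_nat q powi N * of_int (R i)" for i
  proof (induction i)
    case 0
    then show ?case using qtrunc_eq_0[OF vanish] R[of 0] by simp
  next
    case (Suc i)
    have "qtrunc q d (N + int (Suc i)) = qtrunc q d (N + int i) + of_int (d (N + int i)) * of_nat q powi (N + int i)"
      using qtrunc_plus_1[OF vanish, of "N + int i"] by (simp add: ac_simps)
    also have "\<dots> = of_nat q powi N * of_int (R i + int q ^ i * (R (Suc i) div int q ^ i))"
      using Suc q_pos unfolding d_def by (simp add: power_int_add algebra_simps)
    finally show ?case using R_Suc by simp
  qed
  ultimately show ?thesis using vanish unfolding R_def by blast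
qed

lemma qlim_const_exists: "\<exists>d\<in>Qp q. qlim q d (\<lambda>_. r)"
proof -
  obtain N where N: "qval_ge q N r" using qval_ge_exists by blast
  then obtain a b where b: "b > 0" "\<not> int q dvd b" and ab: "r / of_nat q powi N = of_int a / of_int b"
    unfolding qval_ge_def q_integral_iff by blast
  have r: "r = of_nat q powi N * (of_int a / of_int b)"
    using ab q_pos by (simp add: field_simps)
  obtain d where d: "d \<in> Qp q" and vanish: "\<forall>k<N. d k = 0"
    and trunc: "\<And>i. qtrunc q d (N + int i) = of_nat q powi N * of_int (quot_residue a b (int q ^ i))"
    using exists_Qp_truncating_to_residues[OF b(2)] by blast
  have "qval_ge q n (qtrunc q d n - r)" for n
  proof (cases "n \<le> N")
    case True
    then show ?thesis using qtrunc_eq_0[OF vanish True] qval_ge_neg qval_ge_mono N by simp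
  next
    case False
    define i where "i = nat (n - N)"
    have n: "n = N + int i" using False unfolding i_def by simp
    obtain c where c: "a - quot_residue a b (int q ^ i) * b = int q ^ i * c"
      using quot_residue[OF coprime_power_q[OF b(2)]] q_pos by fastforce
    have "qtrunc q d n - r = of_nat q powi N * (of_int (quot_residue a b (int q ^ i) * b - a) / of_int b)"
      unfolding n trunc r using b(1) by (simp add: field_simps)
    also have "quot_residue a b (int q ^ i) * b - a = - c * int q ^ i"
      using c by (simp add: algebra_simps)
    also have "of_nat q powi N * (of_int (- c * int q ^ i) / of_int b)
        = of_int (- c) * of_nat q powi n / (of_int b :: rat)"
      unfolding n using q_pos by (simp add: power_int_add)
    finally have "(qtrunc q d n - r) / of_nat q powi n = of_int (- c) / of_int b"
      using q_pos by simp
    then show ?thesis unfolding qval_ge_def using q_integral_fraction[OF b] by metis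
  qed
  then show ?thesis using d qlim_const_iff by blast
qed

lemma qp_of_rat_limit: "qp_of_rat q r \<in> Qp q \<and> qlim q (qp_of_rat q r) (\<lambda>_. r)"
  unfolding qp_of_rat_def using qlim_const_exists by (rule the_qlim)

lemma qlim_exists_of_qcauchy:
  assumes cauchy: "qcauchy q s" and bounded: "\<forall>m. qval_ge q N (s m)"
  shows "\<exists>d\<in>Qp q. qlim q d s"
proof -
  define D where "D m = qp_of_rat q (s m)" for m
  have D: "D m \<in> Qp q" "qlim q (D m) (\<lambda>_. s m)" for m
    unfolding D_def using qp_of_rat_limit by auto
  have D_vanish: "\<forall>k<N. D m k = 0" for m
    using qlim_const_vanish_below[OF D] bounded by blast
  define M where "M k = (SOME M. \<forall>m\<ge>M. \<forall>m'\<ge>M. qval_ge q (k + 1) (s m - s m'))" for k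
  have M: "\<forall>m\<ge>M k. \<forall>m'\<ge>M k. qval_ge q (k + 1) (s m - s m')" for k
    using someI_ex[OF cauchy[unfolded qcauchy_def, rule_format, of "k + 1"]] unfolding M_def .
  \<comment> \<open>the \<open>k\<close>-th digit of the limit is the \<open>k\<close>-th digit of any term from \<open>M k\<close> on\<close>
  define d where "d k = D (M k) k" for k
  have vanish: "\<forall>k<N. d k = 0" unfolding d_def using D_vanish by auto
  have "d \<in> Qp q" using D(1) vanish unfolding Qp_def d_def by auto
  have "\<exists>M'. \<forall>m\<ge>M'. qcong q n (qtrunc q d n) (s m)" for n
  proof -
    define M' where "M' = Max (insert (M (n - 1)) (M ` {N..<n}))"
    have M': "M (n - 1) \<le> M'" "\<And>k. k \<in> {N..<n} \<Longrightarrow> M k \<le> M'"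
      unfolding M'_def by auto
    have "d k = D M' k" if "k \<in> {N..<n}" for k
    proof -
      have "qval_ge q (k + 1) (s (M k) - s M')" using M[of k] M'(2)[OF that] by auto
      then show ?thesis
        unfolding d_def using qlim_eq_below[OF D(1) D(1) D(2) D(2), of 0 "k + 1"] by auto
    qed
    then have trunc: "qtrunc q d n = qtrunc q (D M') n"
      unfolding qtrunc_eq_sum[OF vanish] qtrunc_eq_sum[OF D_vanish] by (intro sum.cong) auto
    have "qval_ge q n ((qtrunc q (D M') n - s M') + (s M' - s m))" if "M' \<le> m" for m
      using D(2) qlim_const_iff M[of "n - 1"] M'(1) that by (intro qval_ge_add) auto
    then show ?thesis unfolding qcong_iff_qval_ge trunc by auto
  qed
  then show ?thesis using \<open>d \<in> Qp q\<close> unfolding qlim_def by blast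
qed

lemma qcauchy_qtrunc:
  assumes "d \<in> Qp q"
  shows "qcauchy q (\<lambda>m. qtrunc q d (int m))"
  unfolding qcauchy_def
proof (intro allI exI impI)
  fix n and m m' :: nat
  assume "nat n \<le> m" "nat n \<le> m'"
  moreover obtain N where "\<forall>k<N. d k = 0" using Qp_vanish_below[OF assms] by blast
  ultimately have "qval_ge q n ((qtrunc q d (int m) - qtrunc q d n) - (qtrunc q d (int m') - qtrunc q d n))"
    by (intro qval_ge_diff qval_ge_qtrunc_diff) auto
  then show "qval_ge q n (qtrunc q d (int m) - qtrunc q d (int m'))" by simp
qed

lemma qcauchy_add:
  assumes "qcauchy q s" "qcauchy q t"
  shows "qcauchy q (\<lambda>m. s m + t m)"
  unfolding qcauchy_def
proof
  fix n
  obtain M1 M2 where "\<forall>m\<ge>M1. \<forall>m'\<ge>M1. qval_ge q n (s m - s m')"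
    "\<forall>m\<ge>M2. \<forall>m'\<ge>M2. qval_ge q n (t m - t m')"
    using assms unfolding qcauchy_def by meson
  then have "\<forall>m\<ge>max M1 M2. \<forall>m'\<ge>max M1 M2. qval_ge q n ((s m - s m') + (t m - t m'))"
    by (auto intro: qval_ge_add)
  then show "\<exists>M. \<forall>m\<ge>M. \<forall>m'\<ge>M. qval_ge q n (s m + t m - (s m' + t m'))"
    by (intro exI[of _ "max M1 M2"]) (simp add: algebra_simps)
qed

lemma qcauchy_neg: "qcauchy q s \<Longrightarrow> qcauchy q (\<lambda>m. - s m)"
  unfolding qcauchy_def by (metis minus_diff_eq minus_diff_minus qval_ge_neg)

lemma qp_add_limit:
  assumes x: "x \<in> Qp q" and y: "y \<in> Qp q"
  shows "qp_add q x y \<in> Qp q \<and> qlim q (qp_add q x y) (\<lambda>m. qtrunc q x (int m) + qtrunc q y (int m))"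
proof -
  obtain N1 N2 where "\<forall>k<N1. x k = 0" "\<forall>k<N2. y k = 0"
    using Qp_vanish_below x y by meson
  then have "\<forall>m. qval_ge q (min N1 N2) (qtrunc q x (int m) + qtrunc q y (int m))"
    by (auto intro!: qval_ge_add qval_ge_mono[OF qval_ge_qtrunc])
  then show ?thesis
    unfolding qp_add_def
    by (intro the_qlim qlim_exists_of_qcauchy qcauchy_add qcauchy_qtrunc x y)
qed

lemma qp_neg_limit:
  assumes x: "x \<in> Qp q"
  shows "qp_neg q x \<in> Qp q \<and> qlim q (qp_neg q x) (\<lambda>m. - qtrunc q x (int m))"
proof -
  obtain N where "\<forall>k<N. x k = 0"
    using Qp_vanish_below x by meson
  then have "\<forall>m. qval_ge q N (- qtrunc q x (int m))"
    by (auto intro!: qval_ge_neg qval_ge_qtrunc)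
  then show ?thesis
    unfolding qp_neg_def by (intro the_qlim qlim_exists_of_qcauchy qcauchy_neg qcauchy_qtrunc x)
qed

lemma qp_add_eq_below:
  assumes a: "a \<in> Qp q" and a': "a' \<in> Qp q" and w: "w \<in> Qp q" and agree: "\<forall>k<n. a k = a' k"
  shows "\<forall>k<n. qp_add q a w k = qp_add q a' w k"
proof (rule qlim_eq_below[OF _ _ _ _ , where M = "nat n"])
  show "qp_add q a w \<in> Qp q" "qlim q (qp_add q a w) (\<lambda>m. qtrunc q a (int m) + qtrunc q w (int m))"
    using qp_add_limit[OF a w] by auto
  show "qp_add q a' w \<in> Qp q" "qlim q (qp_add q a' w) (\<lambda>m. qtrunc q a' (int m) + qtrunc q w (int m))"
    using qp_add_limit[OF a' w] by auto
  obtain N1 N2 where N: "\<forall>k<N1. a k = 0" "\<forall>k<N2. a' k = 0"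
    using Qp_vanish_below a a' by meson
  then have vanish: "\<forall>k<min N1 N2. a k = 0" "\<forall>k<min N1 N2. a' k = 0" by auto
  have same: "qtrunc q a n = qtrunc q a' n"
    unfolding qtrunc_eq_sum[OF vanish(1)] qtrunc_eq_sum[OF vanish(2)] using agree by (intro sum.cong) auto
  show "\<forall>m\<ge>nat n. qval_ge q n ((qtrunc q a (int m) + qtrunc q w (int m)) - (qtrunc q a' (int m) + qtrunc q w (int m)))"
  proof (intro allI impI)
    fix m assume "nat n \<le> m"
    then have "qval_ge q n ((qtrunc q a (int m) - qtrunc q a n) - (qtrunc q a' (int m) - qtrunc q a' n))"
      using N by (intro qval_ge_diff qval_ge_qtrunc_diff) auto
    then show "qval_ge q n ((qtrunc q a (int m) + qtrunc q w (int m)) - (qtrunc q a' (int m) + qtrunc q w (int m)))"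
      using same by simp
  qed
qed

lemma qp_of_rat_vanish_below: "qval_ge q N r \<Longrightarrow> \<forall>k<N. qp_of_rat q r k = 0"
  using qlim_const_vanish_below qp_of_rat_limit by blast

lemma qp_add_zero: "qp_add q (\<lambda>_. 0) (\<lambda>_. 0) = (\<lambda>_. 0)"
  unfolding qp_add_def using qlim_zero by (simp add: qtrunc_zero zero_mem_Qp the_qlim_eq)

lemma qp_neg_zero: "qp_neg q (\<lambda>_. 0) = (\<lambda>_. 0)"
  unfolding qp_neg_def using qlim_zero by (simp add: qtrunc_zero zero_mem_Qp the_qlim_eq)

lemma qp_mult_of_rat: "qp_mult q (qp_of_rat q r) (qp_of_rat q r') = qp_of_rat q (r * r')"
  unfolding qp_mult_def
proof (rule the_qlim_eq)
  show "qp_of_rat q (r * r') \<in> Qp q" using qp_of_rat_limit by blast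
  let ?t = "\<lambda>m::nat. qtrunc q (qp_of_rat q r) (int m)"
  let ?t' = "\<lambda>m::nat. qtrunc q (qp_of_rat q r') (int m)"
  have lim: "qval_ge q n (qtrunc q (qp_of_rat q x) n - x)" for n x
    using qp_of_rat_limit qlim_const_iff by blast
  obtain N where N: "qval_ge q N r" using qval_ge_exists by blast
  obtain N' where N': "\<forall>k<N'. qp_of_rat q r' k = 0"
    using Qp_vanish_below qp_of_rat_limit by blast
  have "qval_ge q n (qtrunc q (qp_of_rat q (r * r')) n - ?t m * ?t' m)" if m: "nat (n - min N N') \<le> m" for n m
  proof -
    \<comment> \<open>\<open>t t' - r r' = (t - r) t' + r (t' - r')\<close>\<close>
    have "qval_ge q (int m + N') ((?t m - r) * ?t' m)"
      by (rule qval_ge_mult[OF lim qval_ge_qtrunc[OF N']])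
    moreover have "qval_ge q (N + int m) (r * (?t' m - r'))"
      by (rule qval_ge_mult[OF N lim])
    ultimately have "qval_ge q n ((?t m - r) * ?t' m + r * (?t' m - r'))"
      using m by (intro qval_ge_add) (auto elim!: qval_ge_mono)
    then have "qval_ge q n ((qtrunc q (qp_of_rat q (r * r')) n - r * r') - ((?t m - r) * ?t' m + r * (?t' m - r')))"
      by (rule qval_ge_diff[OF lim])
    then show ?thesis by (simp add: algebra_simps)
  qed
  then show "qlim q (qp_of_rat q (r * r')) (\<lambda>m. ?t m * ?t' m)"
    unfolding qlim_def qcong_iff_qval_ge by blast
qed

end

section \<open>The restricted product\<close>

definition af_zero :: adele where
  "af_zero = (\<lambda>_ _. 0)"

definition af_box :: "nat set \<Rightarrow> (nat \<Rightarrow> int) \<Rightarrow> adele set" where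
  "af_box \<Sigma> n = {a \<in> Af \<Sigma>. \<forall>q\<in>\<Sigma>. \<forall>k<n q. a q k = 0}"

lemma S_monoid_prod_power:
  assumes "\<forall>p\<in>\<Sigma>. prime p" "finite F" "F \<subseteq> \<Sigma>"
  shows "(\<Prod>q\<in>F. q ^ e q) \<in> S_monoid \<Sigma>"
  unfolding S_monoid_def
proof safe
  show "(\<Prod>q\<in>F. q ^ e q) > 0"
    using assms by (intro prod_pos) (auto simp: prime_gt_0_nat)
  fix p assume p: "prime p" "p dvd (\<Prod>q\<in>F. q ^ e q)"
  then have "\<exists>q\<in>F. p dvd q ^ e q"
    using prime_dvd_prod_iff[OF assms(2) p(1)] by simp
  then obtain q where "q \<in> F" "p dvd q ^ e q" ..
  then have "p = q"
    using assms(1,3) p(1) prime_dvd_power primes_dvd_imp_eq by blast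
  then show "p \<in> \<Sigma>" using \<open>q \<in> F\<close> assms(3) by blast
qed

lemma qval_ge_prod_power:
  assumes "prime q" "finite F" "q \<in> F"
  shows "qval_ge q (int (e q)) (of_nat (\<Prod>p\<in>F. p ^ e p))"
proof -
  have "(of_nat (\<Prod>p\<in>F. p ^ e p) :: rat) = of_int (int (\<Prod>p\<in>F - {q}. p ^ e p)) * of_nat q powi int (e q)"
    using prod.remove[OF assms(2,3), of "\<lambda>p. p ^ e p"] by (simp add: mult.commute)
  then show ?thesis using qval_ge_int_mult_powi[OF assms(1) order_refl] by metis
qed

context
  fixes \<Sigma> :: "nat set"
  assumes primes: "\<forall>p\<in>\<Sigma>. prime p"
begin

lemma af_zero_mem_Af: "af_zero \<in> Af \<Sigma>"
proof -
  have none: "{q\<in>\<Sigma>. af_zero q \<notin> Zp q} = {}"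
    using primes zero_mem_Qp unfolding Zp_def af_zero_def by auto
  show ?thesis
    unfolding Af_def mem_Collect_eq none using primes zero_mem_Qp by (simp add: af_zero_def)
qed

lemma af_add_zero: "af_add \<Sigma> af_zero af_zero = af_zero"
  unfolding af_add_def af_zero_def using primes qp_add_zero by (auto intro!: ext)

lemma af_of_rat_mem_Af:
  assumes "finite {q\<in>\<Sigma>. \<not> qval_ge q 0 r}"
  shows "af_of_rat \<Sigma> r \<in> Af \<Sigma>"
proof -
  have "qp_of_rat q r \<in> Zp q" if "q \<in> \<Sigma>" "qval_ge q 0 r" for q
    using that primes qp_of_rat_limit qp_of_rat_vanish_below unfolding Zp_def by auto
  then have "{q\<in>\<Sigma>. af_of_rat \<Sigma> r q \<notin> Zp q} \<subseteq> {q\<in>\<Sigma>. \<not> qval_ge q 0 r}"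
    unfolding af_of_rat_def by auto
  then have "finite {q\<in>\<Sigma>. af_of_rat \<Sigma> r q \<notin> Zp q}"
    using assms finite_subset by blast
  then show ?thesis
    using primes qp_of_rat_limit unfolding Af_def by (auto simp: af_of_rat_def)
qed

lemma af_of_rat_of_nat_mem_Af: "af_of_rat \<Sigma> (of_nat s) \<in> Af \<Sigma>"
proof (rule af_of_rat_mem_Af)
  have "{q\<in>\<Sigma>. \<not> qval_ge q 0 (of_nat s)} = {}"
    using primes qval_ge_of_int[of _ 0 "int s"] by auto
  then show "finite {q\<in>\<Sigma>. \<not> qval_ge q 0 (of_nat s)}" by (metis finite.emptyI)
qed

lemma af_of_rat_inverse_mem_Af:
  assumes "s > 0"
  shows "af_of_rat \<Sigma> (1 / of_nat s) \<in> Af \<Sigma>"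
proof (rule af_of_rat_mem_Af)
  have "q dvd s" if "q \<in> \<Sigma>" "\<not> qval_ge q 0 (1 / of_nat s)" for q
    using that primes assms q_integral_fraction[of q "int s" 1] unfolding qval_ge_def by force
  then have "{q\<in>\<Sigma>. \<not> qval_ge q 0 (1 / of_nat s)} \<subseteq> {q. q dvd s}" by blast
  then show "finite {q\<in>\<Sigma>. \<not> qval_ge q 0 (1 / of_nat s)}"
    using finite_divisors_nat assms finite_subset by blast
qed

lemma af_mult_inverse:
  assumes "s > 0"
  shows "af_mult \<Sigma> (af_of_rat \<Sigma> (1 / of_nat s)) (af_of_rat \<Sigma> (of_nat s)) = af_of_rat \<Sigma> 1"
  unfolding af_mult_def af_of_rat_def using primes assms qp_mult_of_rat by (auto intro!: ext)

lemma af_box_subset_af_nbhd: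
  assumes y: "y \<in> Af \<Sigma>" and zero: "af_zero \<in> af_nbhd \<Sigma> y n"
  shows "af_box \<Sigma> n \<subseteq> af_nbhd \<Sigma> y n"
proof
  fix a assume a: "a \<in> af_box \<Sigma> n"
  have "qp_add q (a q) (qp_neg q (y q)) k = 0" if q: "q \<in> \<Sigma>" and k: "k < n q" for q k
  proof -
    have "a q \<in> Qp q" "y q \<in> Qp q" using a y q unfolding af_box_def Af_def by auto
    then have "qp_add q (a q) (qp_neg q (y q)) k = qp_add q (\<lambda>_. 0) (qp_neg q (y q)) k"
      using a q k primes qp_add_eq_below[of q "a q" "\<lambda>_. 0" "qp_neg q (y q)" "n q"]
        zero_mem_Qp qp_neg_limit unfolding af_box_def by auto
    also have "\<dots> = 0" using zero q k unfolding af_nbhd_def af_zero_def by auto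
    finally show ?thesis .
  qed
  then show "a \<in> af_nbhd \<Sigma> y n" using a unfolding af_box_def af_nbhd_def by auto
qed

lemma Af_subset_topspace: "Af \<Sigma> \<subseteq> topspace (af_topology \<Sigma>)"
proof
  fix a assume a: "a \<in> Af \<Sigma>"
  \<comment> \<open>a basic neighbourhood of \<open>0\<close> that contains \<open>a\<close>\<close>
  define n where "n q = (if a q \<in> Zp q then 0 else (SOME N. N \<le> 0 \<and> (\<forall>k<N. a q k = 0)))" for q
  have n: "\<forall>k<n q. a q k = 0" if q_in: "q \<in> \<Sigma>" for q
  proof (cases "a q \<in> Zp q")
    case False
    have "a q \<in> Qp q" using a q_in unfolding Af_def by simp
    then obtain N where "\<forall>k<N. a q k = 0"
      using Qp_vanish_below[OF primes[rule_format, OF q_in]] by blast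
    then have "\<exists>N. N \<le> 0 \<and> (\<forall>k<N. a q k = 0)" by (intro exI[of _ "min N 0"]) auto
    from someI_ex[OF this] show ?thesis unfolding n_def using False by simp
  qed (auto simp: n_def Zp_def)
  have "{q\<in>\<Sigma>. n q \<noteq> 0} \<subseteq> {q\<in>\<Sigma>. a q \<notin> Zp q}" unfolding n_def by auto
  moreover have "finite {q\<in>\<Sigma>. a q \<notin> Zp q}" using a unfolding Af_def by simp
  ultimately have fin: "finite {q\<in>\<Sigma>. n q \<noteq> 0}" by (rule finite_subset)
  have "af_zero \<in> af_nbhd \<Sigma> af_zero n"
    using af_zero_mem_Af primes qp_neg_zero qp_add_zero unfolding af_nbhd_def af_zero_def by simp
  then have "a \<in> af_nbhd \<Sigma> af_zero n"
    using af_box_subset_af_nbhd[OF af_zero_mem_Af] a n unfolding af_box_def by blast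
  then show "a \<in> topspace (af_topology \<Sigma>)"
    unfolding af_topology_def using af_zero_mem_Af fin by auto
qed

lemma af_box_subset_of_openin:
  assumes "openin (af_topology \<Sigma>) W" "af_zero \<in> W"
  shows "\<exists>n. finite {q\<in>\<Sigma>. n q \<noteq> 0} \<and> af_box \<Sigma> n \<subseteq> W"
proof -
  have "generate_topology_on {af_nbhd \<Sigma> x n | x n. x \<in> Af \<Sigma> \<and> finite {q\<in>\<Sigma>. n q \<noteq> 0}} W"
    using assms(1) unfolding af_topology_def by (rule openin_topology_generated_by)
  then show ?thesis using assms(2)
  proof (induction rule: generate_topology_on.induct)
    case (Int A B)
    then obtain n1 n2 where n1: "finite {q\<in>\<Sigma>. n1 q \<noteq> 0}" "af_box \<Sigma> n1 \<subseteq> A"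
      and n2: "finite {q\<in>\<Sigma>. n2 q \<noteq> 0}" "af_box \<Sigma> n2 \<subseteq> B"
      by auto
    have "finite {q\<in>\<Sigma>. max (n1 q) (n2 q) \<noteq> 0}"
      by (rule finite_subset[OF _ finite_UnI[OF n1(1) n2(1)]]) auto
    moreover have "af_box \<Sigma> (\<lambda>q. max (n1 q) (n2 q)) \<subseteq> A \<inter> B"
      using n1(2) n2(2) unfolding af_box_def by auto
    ultimately show ?case by (intro exI[of _ "\<lambda>q. max (n1 q) (n2 q)"] conjI)
  next
    case (UN K)
    then obtain k where "k \<in> K" "af_zero \<in> k" by blast
    then obtain n where "finite {q\<in>\<Sigma>. n q \<noteq> 0}" "af_box \<Sigma> n \<subseteq> k" using UN.IH by blast
    then show ?case using \<open>k \<in> K\<close> by blast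
  next
    case (Basis s)
    then obtain y n where s: "s = af_nbhd \<Sigma> y n" "y \<in> Af \<Sigma>" and fin: "finite {q\<in>\<Sigma>. n q \<noteq> 0}"
      by blast
    then have "af_box \<Sigma> n \<subseteq> s" using af_box_subset_af_nbhd Basis.prems by simp
    then show ?case using fin by blast
  qed simp
qed

lemma af_of_rat_mem_af_box:
  assumes "af_of_rat \<Sigma> r \<in> Af \<Sigma>" "\<forall>q\<in>\<Sigma>. qval_ge q (n q) r"
  shows "af_of_rat \<Sigma> r \<in> af_box \<Sigma> n"
proof -
  have "af_of_rat \<Sigma> r q k = 0" if "q \<in> \<Sigma>" "k < n q" for q k
    using that primes assms(2) qp_of_rat_vanish_below[of q "n q" r] unfolding af_of_rat_def by simp
  then show ?thesis using assms(1) unfolding af_box_def by blast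
qed

lemma S_monoid_element_mem_af_box:
  assumes fin: "finite {q\<in>\<Sigma>. n q \<noteq> 0}"
  shows "\<exists>s\<in>S_monoid \<Sigma>. af_of_rat \<Sigma> (of_nat s) \<in> af_box \<Sigma> n"
proof -
  define F where "F = {q\<in>\<Sigma>. n q \<noteq> 0}"
  define s where "s = (\<Prod>q\<in>F. q ^ nat (n q))"
  have "s \<in> S_monoid \<Sigma>"
    unfolding s_def using primes fin by (intro S_monoid_prod_power) (auto simp: F_def)
  moreover have "qval_ge q (n q) (of_nat s)" if "q \<in> \<Sigma>" for q
  proof (cases "n q \<le> 0")
    case True
    then show ?thesis using primes that qval_ge_of_int[of q "n q" "int s"] by simp
  next
    case False
    then have "q \<in> F" using that unfolding F_def by simp
    then show ?thesis
      using qval_ge_prod_power[of q F "\<lambda>q. nat (n q)"] primes that fin False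
      unfolding s_def F_def by simp
  qed
  ultimately show ?thesis
    using af_of_rat_mem_af_box af_of_rat_of_nat_mem_Af by blast
qed

end

section \<open>Locally compact \<open>\<A>\<^sub>f\<close>-modules\<close>

lemma continuous_map_prod_fix_right:
  assumes "continuous_map (prod_topology X Y) Z f" "y \<in> topspace Y"
  shows "continuous_map X Z (\<lambda>x. f (x, y))"
proof -
  have "continuous_map X (prod_topology X Y) (\<lambda>x. (x, y))"
    using assms(2) by (intro continuous_map_pairedI) (simp_all add: continuous_map_id[unfolded id_def])
  from continuous_map_compose[OF this assms(1)] show ?thesis by (simp add: o_def)
qed

lemma continuous_map_prod_fix_left:
  assumes "continuous_map (prod_topology X Y) Z f" "x \<in> topspace X"
  shows "continuous_map Y Z (\<lambda>y. f (x, y))"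
proof -
  have "continuous_map Y (prod_topology X Y) (\<lambda>y. (x, y))"
    using assms(2) by (intro continuous_map_pairedI) (simp_all add: continuous_map_id[unfolded id_def])
  from continuous_map_compose[OF this assms(1)] show ?thesis by (simp add: o_def)
qed

lemma inverse_mem_Z_S_inv: "s \<in> S_monoid \<Sigma> \<Longrightarrow> 1 / of_nat s \<in> Z_S_inv \<Sigma>"
  unfolding Z_S_inv_def by (metis (mono_tags, lifting) mem_Collect_eq of_int_1)

lemma smult_mem_ZS_span: "r \<in> Z_S_inv \<Sigma> \<Longrightarrow> c \<in> K \<Longrightarrow> sm (af_of_rat \<Sigma> r) c \<in> ZS_span \<Sigma> sm K"
  unfolding ZS_span_def by (intro CollectI exI[of _ 1] exI[of _ "\<lambda>_. r"] exI[of _ "\<lambda>_. c"]) simp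

context
  fixes \<Sigma> :: "nat set"
    and sm :: "adele \<Rightarrow> 'm::{topological_ab_group_add,t2_space} \<Rightarrow> 'm"
  assumes primes: "\<forall>p\<in>\<Sigma>. prime p"
    and module: "lc_Af_module \<Sigma> sm"
begin

lemma smult_af_zero: "sm af_zero x = 0"
proof -
  have "sm af_zero x = sm af_zero x + sm af_zero x"
    using module af_add_zero[OF primes] af_zero_mem_Af[OF primes]
    unfolding lc_Af_module_def by metis
  then show ?thesis by simp
qed

lemma continuous_smult:
  assumes "a \<in> Af \<Sigma>"
  shows "continuous_on UNIV (sm a)"
proof -
  have "continuous_map euclidean euclidean (\<lambda>x. (\<lambda>(a, x). sm a x) (a, x))"
    using module Af_subset_topspace[OF primes] assms unfolding lc_Af_module_def
    by (intro continuous_map_prod_fix_left) auto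
  then show ?thesis by simp
qed

lemma S_multiple_mem_open:
  assumes "open C" "0 \<in> C"
  shows "\<exists>s\<in>S_monoid \<Sigma>. sm (af_of_rat \<Sigma> (of_nat s)) x \<in> C"
proof -
  have "continuous_map (af_topology \<Sigma>) euclidean (\<lambda>a. sm a x)"
    using module continuous_map_prod_fix_right[where f = "\<lambda>(a, x). sm a x" and y = x]
    unfolding lc_Af_module_def by auto
  then have "openin (af_topology \<Sigma>) {a \<in> topspace (af_topology \<Sigma>). sm a x \<in> C}"
    using assms(1) by (intro openin_continuous_map_preimage) auto
  moreover have "af_zero \<in> {a \<in> topspace (af_topology \<Sigma>). sm a x \<in> C}"
    using Af_subset_topspace[OF primes] af_zero_mem_Af[OF primes] smult_af_zero assms(2) by auto
  ultimately obtain n where "finite {q\<in>\<Sigma>. n q \<noteq> 0}"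
    and "af_box \<Sigma> n \<subseteq> {a \<in> topspace (af_topology \<Sigma>). sm a x \<in> C}"
    using af_box_subset_of_openin[OF primes] by meson
  then show ?thesis using S_monoid_element_mem_af_box[OF primes] by blast
qed

lemma smult_inverse_cancel:
  assumes "s > 0"
  shows "sm (af_of_rat \<Sigma> (1 / of_nat s)) (sm (af_of_rat \<Sigma> (of_nat s)) x) = x"
  using module af_mult_inverse[OF primes assms] af_of_rat_inverse_mem_Af[OF primes assms]
    af_of_rat_of_nat_mem_Af[OF primes]
  unfolding lc_Af_module_def by metis

lemma Union_S_inverse_images:
  assumes "open C" "0 \<in> C"
  shows "(\<Union>s\<in>S_monoid \<Sigma>. sm (af_of_rat \<Sigma> (1 / of_nat s)) ` C) = UNIV"
proof -
  have "x \<in> (\<Union>s\<in>S_monoid \<Sigma>. sm (af_of_rat \<Sigma> (1 / of_nat s)) ` C)" for x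
  proof -
    obtain s where s: "s \<in> S_monoid \<Sigma>" "sm (af_of_rat \<Sigma> (of_nat s)) x \<in> C"
      using S_multiple_mem_open[OF assms] by blast
    then have "s > 0" unfolding S_monoid_def by simp
    have "x \<in> sm (af_of_rat \<Sigma> (1 / of_nat s)) ` C"
      using smult_inverse_cancel[OF \<open>s > 0\<close>, symmetric] s(2) by (rule image_eqI)
    then show ?thesis using s(1) by blast
  qed
  then show ?thesis by blast
qed

end

theorem mainTheorem13:
  fixes \<Sigma> :: "nat set"
    and sm :: "adele \<Rightarrow> 'm::{topological_ab_group_add,t2_space} \<Rightarrow> 'm"
    and C :: "'m set"
  assumes "\<forall>p\<in>\<Sigma>. prime p"
    and "lc_Af_module \<Sigma> sm"
    and "compact C" and "open C" and "0 \<in> C" and "\<forall>x\<in>C. \<forall>y\<in>C. x - y \<in> C"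
  shows "ZS_span \<Sigma> sm C = UNIV
         \<and> (\<exists>K. compact K \<and> ZS_span \<Sigma> sm K = UNIV)
         \<and> (\<exists>K :: nat \<Rightarrow> 'm set. (\<forall>n. compact (K n)) \<and> (\<Union>n. K n) = UNIV)"
proof -
  note cover = Union_S_inverse_images[OF assms(1,2,4,5)]
  have "(\<Union>s\<in>S_monoid \<Sigma>. sm (af_of_rat \<Sigma> (1 / of_nat s)) ` C) \<subseteq> ZS_span \<Sigma> sm C"
    using smult_mem_ZS_span[OF inverse_mem_Z_S_inv] by (intro UN_least image_subsetI)
  then have span: "ZS_span \<Sigma> sm C = UNIV" unfolding cover by blast
  define K where "K s = (if s \<in> S_monoid \<Sigma> then sm (af_of_rat \<Sigma> (1 / of_nat s)) ` C else {})" for s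
  have "compact (K s)" for s
    using assms(3) continuous_smult[OF assms(1,2) af_of_rat_inverse_mem_Af[OF assms(1)]]
    unfolding K_def S_monoid_def by (auto intro: compact_continuous_image continuous_on_subset)
  moreover have "(\<Union>s. K s) = UNIV"
    using cover unfolding K_def by (auto split: if_splits)
  ultimately show ?thesis using span assms(3) by blast
qed

end
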